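(* Let $I(z)$ be a nonzero polynomial solution of the KZ system over $\mathbb{F}_p$ with $\mathrm{id}$-leading term $C z_1^{d_1}\cdots z_n^{d_n}$, $C\in\mathbb{F}_p^n$. Then $$\sum_{j=1}^nM_jC_j=0,\qquad \Omega^M_jC=d_jC\ \ (j=1,\dots,n-1),\qquad d_n\equiv0\pmod p,$$ with equalities in $\mathbb{F}_p$.
   Context: Let $p,q$ be primes and $n$ a positive integer with $p>n\ge2$, $p>q$. Fix positive integers $m_1,\dots,m_n<q$; $M_i$ is the least positive integer with $M_i\equiv -m_iq^{-1}\pmod p$. For $i\ne j$ let $\Omega_{ij}$ be the $n\times n$ matrix with only nonzero entries $(\Omega_{ij})_{ii}=-m_j$, $(\Omega_{ij})_{ij}=m_j$, $(\Omega_{ij})_{ji}=m_i$, $(\Omega_{ij})_{jj}=-m_i$. A polynomial solution of the KZ system over $\mathbb{F}_p$ is $I\in\mathbb{F}_p[z_1,\dots,z_n]^n$ with $\partial I/\partial z_i=q^{-1}\sum_{j\ne i}\Omega_{ij}I/(z_i-z_j)$ for all $i$ and $\sum_im_iI_i=0$. For $j\ne l$, $\Omega^M_{jl}$ is the $n\times n$ matrix over $\mathbb{F}_p$ with only nonzero entries $(\Omega^M_{jl})_{jj}=M_l$, $(\Omega^M_{jl})_{jl}=-M_l$, $(\Omega^M_{jl})_{lj}=-M_j$, $(\Omega^M_{jl})_{ll}=M_j$; $\Omega^M_j=\sum_{l=j+1}^n\Omega^M_{jl}$. Monomials are ordered lexicographically with $z_1>\dots>z_n$, and the $\mathrm{id}$-leading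 term of a nonzero $f\in\mathbb{F}_p[z]^n$ is $az^d$ with $z^d$ the largest monomial with nonzero coefficient $a\in\mathbb{F}_p^n$. *)

theory Defs
  imports "HOL-Library.Poly_Mapping" "HOL-Number_Theory.Cong"
begin

text \<open>Multivariate polynomials over a ring 'a: finitely supported maps from exponent
  vectors (finitely supported nat-to-nat maps, key i = exponent of z_i) to coefficients.  Variables are
  z_1, ..., z_n (keys 1..n).  The order on exponent vectors is the library order of
  poly_mapping, i.e. Fun_Lexorder.less_fun: d < d' iff at the smallest index k where
  they differ, d k < d' k.  This is the lexicographic order with z_1 > ... > z_n.\<close>

type_synonym 'a mpoly = "(nat \<Rightarrow>\<^sub>0 nat) \<Rightarrow>\<^sub>0 'a"

definition mp_var :: "nat \<Rightarrow> 'a::comm_ring_1 mpoly" where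
  "mp_var i = Poly_Mapping.single (Poly_Mapping.single i 1) 1"

definition mp_const :: "'a::comm_ring_1 \<Rightarrow> 'a mpoly" where
  "mp_const c = Poly_Mapping.single 0 c"

definition mp_pderiv :: "nat \<Rightarrow> 'a::comm_ring_1 mpoly \<Rightarrow> 'a mpoly" where
  "mp_pderiv i f = (\<Sum>mon::nat \<Rightarrow>\<^sub>0 nat\<in>Poly_Mapping.keys f.
      Poly_Mapping.single (mon - Poly_Mapping.single i 1) (of_nat (Poly_Mapping.lookup mon i) * Poly_Mapping.lookup f mon))"

definition Omega :: "(nat \<Rightarrow> nat) \<Rightarrow> nat \<Rightarrow> nat \<Rightarrow> nat \<Rightarrow> nat \<Rightarrow> int" where
  "Omega m i j r s =
     (if r = i \<and> s = i then - int (m j)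
      else if r = i \<and> s = j then int (m j)
      else if r = j \<and> s = i then int (m i)
      else if r = j \<and> s = j then - int (m i)
      else 0)"

definition KZ_M :: "nat \<Rightarrow> nat \<Rightarrow> (nat \<Rightarrow> nat) \<Rightarrow> nat \<Rightarrow> nat" where
  "KZ_M p q m i = (LEAST M::nat. 0 < M \<and> [M * q + m i = 0] (mod p))"

definition OmegaM :: "(nat \<Rightarrow> nat) \<Rightarrow> nat \<Rightarrow> nat \<Rightarrow> nat \<Rightarrow> nat \<Rightarrow> int" where
  "OmegaM M j l r s =
     (if r = j \<and> s = j then int (M l)
      else if r = j \<and> s = l then - int (M l)
      else if r = l \<and> s = j then - int (M j)
      else if r = l \<and> s = l then int (M j)
      else 0)"

text \<open>The equations
  dI/dz_i = q^{-1} sum_{j<>i} Omega_ij I/(z_i - z_j) are stated after multiplying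
  by q * prod_{k<>i}(z_i - z_k) (clearing denominators in the integral domain).\<close>
definition is_KZ_solution :: "nat \<Rightarrow> nat \<Rightarrow> (nat \<Rightarrow> nat) \<Rightarrow> (nat \<Rightarrow> 'a::field mpoly) \<Rightarrow> bool" where
  "is_KZ_solution n q m I \<longleftrightarrow>
     (\<forall>r\<in>{1..n}. \<forall>mon\<in>Poly_Mapping.keys (I r). Poly_Mapping.keys mon \<subseteq> {1..n}) \<and>
     (\<forall>i\<in>{1..n}. \<forall>r\<in>{1..n}.
        mp_const (of_nat q) * (\<Prod>k\<in>{1..n} - {i}. mp_var i - mp_var k) * mp_pderiv i (I r)
        = (\<Sum>j\<in>{1..n} - {i}.
             (\<Sum>s=1..n. mp_const (of_int (Omega m i j r s)) * I s)
             * (\<Prod>k\<in>{1..n} - {i, j}. mp_var i - mp_var k))) \<and>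
     (\<Sum>i=1..n. mp_const (of_nat (m i)) * I i) = 0"

definition id_leading_exp :: "nat \<Rightarrow> (nat \<Rightarrow> 'a::zero mpoly) \<Rightarrow> (nat \<Rightarrow>\<^sub>0 nat)" where
  "id_leading_exp n I = Max (\<Union>r\<in>{1..n}. Poly_Mapping.keys (I r))"

end

(*
  Fix i and multiply the i-th KZ equation by z_i.  In the lexicographic order the leading term of
  prod_{k<>i} (z_i - z_k) is +-prod_{k<>i} z_{min(i,k)}; call its exponent E.  By the Euler identity
  for z_i d/dz_i, the coefficient of z^(E+d) on the left is +-q d_i C_r.  On the right the j-th summand
  lacks the factor z_i - z_j: for j > i the extra factor z_i restores the monomial z^E, while for j < i it
  replaces z_j by the smaller z_i, so the summand does not reach z^(E+d).  Hence
  q d_i C = sum_{j>i} Omega_ij C; since q M_j = -m_j in F_p, dividing by q gives Omega^M_i C = d_i C.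
  For i = n the sum is empty, so d_n = 0 in F_p.  The first identity is the coefficient of z^d in
  sum_i m_i I_i = 0, rewritten the same way.
*)
theory Submission
  imports Defs "HOL-Number_Theory.Residues"
begin

lemma lookup_single_mult_add:
  fixes g :: "'b::cancel_comm_monoid_add \<Rightarrow>\<^sub>0 'a::semiring_0"
  shows "Poly_Mapping.lookup (Poly_Mapping.single a c * g) (a + y) = c * Poly_Mapping.lookup g y"
proof -
  have "Poly_Mapping.lookup (Poly_Mapping.single a c * g) (a + y)
      = (\<Sum>l. (c when a = l) * (\<Sum>q. Poly_Mapping.lookup g q when a + y = l + q))"
    by (simp add: lookup_mult lookup_single)
  also have "\<dots> = c * (\<Sum>q. Poly_Mapping.lookup g q when y = q)"
    by (simp add: when_mult)
  finally show ?thesis by simp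
qed

lemma lookup_const_mult:
  "Poly_Mapping.lookup (mp_const c * f) x = c * Poly_Mapping.lookup (f :: 'a::comm_ring_1 mpoly) x"
  using lookup_single_mult_add[of 0 c f x] by (simp add: mp_const_def)

lemma keys_const_mult:
  "Poly_Mapping.keys (mp_const c * f) \<subseteq> Poly_Mapping.keys (f :: 'a::comm_ring_1 mpoly)"
  by (auto simp: in_keys_iff lookup_const_mult)

lemma
  fixes f g :: "'b::{ordered_cancel_comm_monoid_add, linorder} \<Rightarrow>\<^sub>0 'a::semiring_0"
  assumes f: "Poly_Mapping.keys f \<subseteq> {..a}" and g: "Poly_Mapping.keys g \<subseteq> {..b}"
  shows keys_mult_atMost: "Poly_Mapping.keys (f * g) \<subseteq> {..a + b}"
    and lookup_mult_atMost_add: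
      "Poly_Mapping.lookup (f * g) (a + b) = Poly_Mapping.lookup f a * Poly_Mapping.lookup g b"
proof -
  show "Poly_Mapping.keys (f * g) \<subseteq> {..a + b}"
    using keys_mult[of f g] f g by (auto intro: add_mono)
  have "Poly_Mapping.lookup f l * (\<Sum>q. Poly_Mapping.lookup g q when a + b = l + q)
      = (Poly_Mapping.lookup f a * Poly_Mapping.lookup g b when l = a)" for l
  proof (cases "l \<in> Poly_Mapping.keys f \<and> l \<noteq> a")
    case True
    then have "l < a" using f by fastforce
    then have "a + b \<noteq> l + q" if "q \<in> Poly_Mapping.keys g" for q
      using that g add_less_le_mono[of l a q b] by fastforce
    then have "(Poly_Mapping.lookup g q when a + b = l + q) = 0" for q
      by (cases "q \<in> Poly_Mapping.keys g") (auto simp: in_keys_iff)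
    then show ?thesis using True by simp
  qed (auto simp: in_keys_iff when_def)
  then show "Poly_Mapping.lookup (f * g) (a + b) = Poly_Mapping.lookup f a * Poly_Mapping.lookup g b"
    by (simp add: lookup_mult)
qed

lemma
  fixes f :: "'i \<Rightarrow> ('b::{ordered_cancel_comm_monoid_add, linorder} \<Rightarrow>\<^sub>0 'a::comm_semiring_1)"
  assumes "finite S" and "\<And>k. k \<in> S \<Longrightarrow> Poly_Mapping.keys (f k) \<subseteq> {..e k}"
  shows keys_prod_atMost: "Poly_Mapping.keys (\<Prod>k\<in>S. f k) \<subseteq> {..\<Sum>k\<in>S. e k}"
    and lookup_prod_atMost_sum:
      "Poly_Mapping.lookup (\<Prod>k\<in>S. f k) (\<Sum>k\<in>S. e k) = (\<Prod>k\<in>S. Poly_Mapping.lookup (f k) (e k))"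
proof -
  have "Poly_Mapping.keys (\<Prod>k\<in>S. f k) \<subseteq> {..\<Sum>k\<in>S. e k} \<and>
    Poly_Mapping.lookup (\<Prod>k\<in>S. f k) (\<Sum>k\<in>S. e k) = (\<Prod>k\<in>S. Poly_Mapping.lookup (f k) (e k))"
    using assms by (induction S rule: finite_induct)
      (simp_all add: keys_mult_atMost lookup_mult_atMost_add)
  then show "Poly_Mapping.keys (\<Prod>k\<in>S. f k) \<subseteq> {..\<Sum>k\<in>S. e k}"
    and "Poly_Mapping.lookup (\<Prod>k\<in>S. f k) (\<Sum>k\<in>S. e k) = (\<Prod>k\<in>S. Poly_Mapping.lookup (f k) (e k))"
    by auto
qed

abbreviation unit_exp :: "nat \<Rightarrow> (nat \<Rightarrow>\<^sub>0 nat)" where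
  "unit_exp i \<equiv> Poly_Mapping.single i 1"

lemma unit_exp_less: "i < k \<Longrightarrow> unit_exp k < unit_exp i"
  unfolding less_poly_mapping.rep_eq less_fun_def
  by (rule exI[of _ i]) (auto simp: lookup_single)

lemma
  assumes "i \<noteq> k"
  shows keys_var_diff:
      "Poly_Mapping.keys (mp_var i - mp_var k :: 'a::comm_ring_1 mpoly) \<subseteq> {..unit_exp (min i k)}"
    and lookup_var_diff:
      "Poly_Mapping.lookup (mp_var i - mp_var k :: 'a::comm_ring_1 mpoly) (unit_exp (min i k))
         = (if i < k then 1 else -1)"
proof -
  have "Poly_Mapping.keys (mp_var i - mp_var k :: 'a mpoly) \<subseteq> {unit_exp i, unit_exp k}"
    using keys_diff[of "mp_var i :: 'a mpoly" "mp_var k"] by (auto simp: mp_var_def)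
  then show "Poly_Mapping.keys (mp_var i - mp_var k :: 'a mpoly) \<subseteq> {..unit_exp (min i k)}"
    using assms unit_exp_less[of i k] unit_exp_less[of k i] by (auto simp: min_def)
  have "unit_exp i \<noteq> unit_exp k"
    using assms by (metis lookup_single_eq lookup_single_not_eq one_neq_zero)
  then show "Poly_Mapping.lookup (mp_var i - mp_var k :: 'a mpoly) (unit_exp (min i k)) = (if i < k then 1 else -1)"
    using assms by (auto simp: mp_var_def lookup_minus lookup_single when_def min_def)
qed

lemma lookup_pderiv:
  "Poly_Mapping.lookup (mp_pderiv i f) y
     = of_nat (Poly_Mapping.lookup y i + 1) * Poly_Mapping.lookup (f :: 'a::comm_ring_1 mpoly) (y + unit_exp i)"
proof -
  have "(of_nat (Poly_Mapping.lookup x i) * Poly_Mapping.lookup f x when x - unit_exp i = y)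
      = (of_nat (Poly_Mapping.lookup y i + 1) * Poly_Mapping.lookup f x when x = y + unit_exp i)" for x
  proof (cases "Poly_Mapping.lookup x i = 0")
    case False
    then have "x - unit_exp i = y \<longleftrightarrow> x = y + unit_exp i"
      by (auto simp: poly_mapping_eq_iff fun_eq_iff lookup_add lookup_minus lookup_single when_def)
    then show ?thesis by (auto simp: when_def lookup_add)
  qed (auto simp: when_def lookup_add)
  then show ?thesis
    by (simp add: mp_pderiv_def lookup_sum lookup_single when_def in_keys_iff)
qed

lemma lookup_var_mult_pderiv:
  "Poly_Mapping.lookup (mp_var i * mp_pderiv i f) x
     = of_nat (Poly_Mapping.lookup x i) * Poly_Mapping.lookup (f :: 'a::comm_ring_1 mpoly) x"
proof (cases "Poly_Mapping.lookup x i = 0")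
  case True
  have "x \<notin> Poly_Mapping.keys (mp_var i * mp_pderiv i f)"
  proof
    assume "x \<in> Poly_Mapping.keys (mp_var i * mp_pderiv i f)"
    then obtain y where "x = unit_exp i + y"
      using keys_mult[of "mp_var i" "mp_pderiv i f"] by (auto simp: mp_var_def)
    with True show False by (simp add: lookup_add)
  qed
  with True show ?thesis by (simp add: in_keys_iff)
next
  case False
  then have x: "x = unit_exp i + (x - unit_exp i)"
    by (auto simp: poly_mapping_eq_iff fun_eq_iff lookup_add lookup_minus lookup_single when_def)
  have "Poly_Mapping.lookup (mp_var i * mp_pderiv i f) (unit_exp i + (x - unit_exp i))
      = Poly_Mapping.lookup (mp_pderiv i f) (x - unit_exp i)"
    by (simp add: mp_var_def lookup_single_mult_add)
  also have "\<dots> = of_nat (Poly_Mapping.lookup x i) * Poly_Mapping.lookup f x"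
    unfolding lookup_pderiv using False by (subst (2) x) (simp add: lookup_minus add.commute)
  finally have "Poly_Mapping.lookup (mp_var i * mp_pderiv i f) (unit_exp i + (x - unit_exp i))
      = of_nat (Poly_Mapping.lookup x i) * Poly_Mapping.lookup f x" .
  with x show ?thesis by simp
qed

lemma
  assumes "finite S" and "i \<notin> S"
  shows keys_prod_var_diff:
      "Poly_Mapping.keys (\<Prod>k\<in>S. mp_var i - mp_var k :: 'a::comm_ring_1 mpoly)
         \<subseteq> {..\<Sum>k\<in>S. unit_exp (min i k)}"
    and lookup_prod_var_diff:
      "Poly_Mapping.lookup (\<Prod>k\<in>S. mp_var i - mp_var k :: 'a::comm_ring_1 mpoly) (\<Sum>k\<in>S. unit_exp (min i k))
         = (\<Prod>k\<in>S. if i < k then 1 else -1)"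
proof -
  have factors: "Poly_Mapping.keys (mp_var i - mp_var k :: 'a mpoly) \<subseteq> {..unit_exp (min i k)}"
    if "k \<in> S" for k
    using that assms(2) by (intro keys_var_diff) auto
  show "Poly_Mapping.keys (\<Prod>k\<in>S. mp_var i - mp_var k :: 'a mpoly) \<subseteq> {..\<Sum>k\<in>S. unit_exp (min i k)}"
    using assms(1) factors by (rule keys_prod_atMost)
  have "Poly_Mapping.lookup (\<Prod>k\<in>S. mp_var i - mp_var k :: 'a mpoly) (\<Sum>k\<in>S. unit_exp (min i k))
      = (\<Prod>k\<in>S. Poly_Mapping.lookup (mp_var i - mp_var k) (unit_exp (min i k)))"
    using assms(1) factors by (rule lookup_prod_atMost_sum)
  also have "\<dots> = (\<Prod>k\<in>S. if i < k then 1 else -1)"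
    using assms(2) by (intro prod.cong refl lookup_var_diff) auto
  finally show "Poly_Mapping.lookup (\<Prod>k\<in>S. mp_var i - mp_var k :: 'a mpoly) (\<Sum>k\<in>S. unit_exp (min i k))
      = (\<Prod>k\<in>S. if i < k then 1 else -1)" .
qed

lemma lookup_mult_var_mult_prod_var_diff:
  fixes g :: "'a::comm_ring_1 mpoly"
  assumes S: "finite S" "i \<notin> S" "j \<in> S" and g: "Poly_Mapping.keys g \<subseteq> {..d}"
  shows "Poly_Mapping.lookup (g * (mp_var i * (\<Prod>k\<in>S - {j}. mp_var i - mp_var k)))
           ((\<Sum>k\<in>S. unit_exp (min i k)) + d)
         = (if i < j then Poly_Mapping.lookup g d * (\<Prod>k\<in>S. if i < k then 1 else -1) else 0)"
proof -
  define E where "E = (\<Sum>k\<in>S - {j}. unit_exp (min i k))"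
  define Q where "Q = mp_var i * (\<Prod>k\<in>S - {j}. mp_var i - mp_var k :: 'a mpoly)"
  have var: "Poly_Mapping.keys (mp_var i :: 'a mpoly) \<subseteq> {..unit_exp i}"
    by (simp add: mp_var_def)
  have Q_keys: "Poly_Mapping.keys Q \<subseteq> {..unit_exp i + E}"
    unfolding Q_def E_def using S by (intro keys_mult_atMost var keys_prod_var_diff) auto
  have "Poly_Mapping.lookup Q (unit_exp i + E)
      = Poly_Mapping.lookup (\<Prod>k\<in>S - {j}. mp_var i - mp_var k :: 'a mpoly) E"
    unfolding Q_def by (simp add: mp_var_def lookup_single_mult_add)
  also have "\<dots> = (\<Prod>k\<in>S - {j}. if i < k then 1 else -1)"
    unfolding E_def using S by (intro lookup_prod_var_diff) auto
  finally have Q_lookup: "Poly_Mapping.lookup Q (unit_exp i + E) = (\<Prod>k\<in>S - {j}. if i < k then 1 else -1)" .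
  have split_E: "(\<Sum>k\<in>S. unit_exp (min i k)) = unit_exp (min i j) + E"
    unfolding E_def using S by (simp add: sum.remove)
  show ?thesis
  proof (cases "i < j")
    case True
    have "(\<Prod>k\<in>S. if i < k then 1 else -1 :: 'a) = (\<Prod>k\<in>S - {j}. if i < k then 1 else -1)"
      using S True by (simp add: prod.remove)
    moreover have "(\<Sum>k\<in>S. unit_exp (min i k)) + d = d + (unit_exp i + E)"
      unfolding split_E using True by (simp add: ac_simps)
    ultimately show ?thesis
      using True lookup_mult_atMost_add[OF g Q_keys] Q_lookup by (simp add: Q_def)
  next
    case False
    then have "j < i" using S by (cases "i = j") auto
    then have "d + (unit_exp i + E) < (\<Sum>k\<in>S. unit_exp (min i k)) + d"
      unfolding split_E using unit_exp_less by (simp add: add.commute add_strict_right_mono)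
    then have "(\<Sum>k\<in>S. unit_exp (min i k)) + d \<notin> Poly_Mapping.keys (g * Q)"
      using keys_mult_atMost[OF g Q_keys] by fastforce
    with False show ?thesis by (simp add: Q_def in_keys_iff)
  qed
qed

lemma KZ_leading_coeff_eq:
  fixes I :: "nat \<Rightarrow> 'a::field mpoly"
  assumes KZ: "is_KZ_solution n q m I"
    and d: "\<And>s. s \<in> {1..n} \<Longrightarrow> Poly_Mapping.keys (I s) \<subseteq> {..d}"
    and i: "i \<in> {1..n}" and r: "r \<in> {1..n}"
  shows "of_nat q * (of_nat (Poly_Mapping.lookup d i) * Poly_Mapping.lookup (I r) d)
    = (\<Sum>j\<in>{i+1..n}. \<Sum>s=1..n. of_int (Omega m i j r s) * Poly_Mapping.lookup (I s) d)"
proof -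
  define S where "S = {1..n} - {i}"
  define P where "P = (\<Prod>k\<in>S. mp_var i - mp_var k :: 'a mpoly)"
  define E where "E = (\<Sum>k\<in>S. unit_exp (min i k))"
  define c where "c = (\<Prod>k\<in>S. if i < k then 1 else -1 :: 'a)"
  define T where "T j = (\<Sum>s=1..n. mp_const (of_int (Omega m i j r s)) * I s)" for j
  have S: "finite S" "i \<notin> S" unfolding S_def by auto
  have "c \<noteq> 0" unfolding c_def using S(1) by simp
  have KZ_i: "mp_const (of_nat q) * P * mp_pderiv i (I r) = (\<Sum>j\<in>S. T j * (\<Prod>k\<in>S - {j}. mp_var i - mp_var k))"
    using KZ i r unfolding is_KZ_solution_def S_def P_def T_def
    by (simp add: Diff_insert2[symmetric] insert_commute)
  have T_keys: "Poly_Mapping.keys (T j) \<subseteq> {..d}" for j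
    unfolding T_def using d keys_const_mult by (intro order.trans[OF keys_sum]) blast
  have euler_keys: "Poly_Mapping.keys (mp_var i * mp_pderiv i (I r)) \<subseteq> {..d}"
    using d[OF r] by (auto simp: in_keys_iff lookup_var_mult_pderiv)
  have P_keys: "Poly_Mapping.keys (mp_const (of_nat q) * P) \<subseteq> {..E}"
    unfolding P_def E_def using keys_const_mult keys_prod_var_diff[OF S] by blast
  have "Poly_Mapping.lookup (mp_var i * (mp_const (of_nat q) * P * mp_pderiv i (I r))) (E + d)
      = Poly_Mapping.lookup ((mp_const (of_nat q) * P) * (mp_var i * mp_pderiv i (I r))) (E + d)"
    by (simp add: ac_simps)
  also have "\<dots> = of_nat q * c * (of_nat (Poly_Mapping.lookup d i) * Poly_Mapping.lookup (I r) d)"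
    unfolding lookup_mult_atMost_add[OF P_keys euler_keys]
    using lookup_prod_var_diff[OF S, where 'a='a, folded P_def E_def c_def]
    by (simp add: lookup_const_mult lookup_var_mult_pderiv)
  finally have lhs: "Poly_Mapping.lookup (mp_var i * (mp_const (of_nat q) * P * mp_pderiv i (I r))) (E + d)
      = of_nat q * c * (of_nat (Poly_Mapping.lookup d i) * Poly_Mapping.lookup (I r) d)" .
  have "Poly_Mapping.lookup (mp_var i * (\<Sum>j\<in>S. T j * (\<Prod>k\<in>S - {j}. mp_var i - mp_var k))) (E + d)
      = (\<Sum>j\<in>S. Poly_Mapping.lookup (T j * (mp_var i * (\<Prod>k\<in>S - {j}. mp_var i - mp_var k))) (E + d))"
    by (simp add: sum_distrib_left lookup_sum ac_simps)
  also have "\<dots> = (\<Sum>j\<in>S. if i < j then Poly_Mapping.lookup (T j) d * c else 0)"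
    unfolding E_def c_def using S T_keys by (intro sum.cong refl lookup_mult_var_mult_prod_var_diff) auto
  also have "\<dots> = c * (\<Sum>j\<in>{i+1..n}. Poly_Mapping.lookup (T j) d)"
    unfolding sum.inter_filter[OF S(1), symmetric] sum_distrib_left
    by (rule sum.cong) (auto simp: S_def mult.commute)
  finally have rhs: "Poly_Mapping.lookup (mp_var i * (\<Sum>j\<in>S. T j * (\<Prod>k\<in>S - {j}. mp_var i - mp_var k))) (E + d)
      = c * (\<Sum>j\<in>{i+1..n}. Poly_Mapping.lookup (T j) d)" .
  from lhs rhs KZ_i \<open>c \<noteq> 0\<close> show ?thesis
    by (simp add: T_def lookup_sum lookup_const_mult mult.assoc)
qed

lemma KZ_weighted_coeff_sum:
  assumes "is_KZ_solution n q m (I :: nat \<Rightarrow> 'a::field mpoly)"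
  shows "(\<Sum>i=1..n. of_nat (m i) * Poly_Mapping.lookup (I i) x) = 0"
proof -
  have "(\<Sum>i=1..n. mp_const (of_nat (m i)) * I i) = 0"
    using assms by (simp add: is_KZ_solution_def)
  then have "Poly_Mapping.lookup (\<Sum>i=1..n. mp_const (of_nat (m i)) * I i) x = 0"
    by simp
  then show ?thesis
    by (simp add: lookup_sum lookup_const_mult)
qed

lemma keys_subset_id_leading_exp:
  "r \<in> {1..n} \<Longrightarrow> Poly_Mapping.keys (I r) \<subseteq> {..id_leading_exp n I}"
  unfolding id_leading_exp_def by (auto intro!: Max_ge)

lemma id_leading_exp_in_keys:
  assumes "\<exists>r\<in>{1..n}. I r \<noteq> 0"
  shows "\<exists>r\<in>{1..n}. id_leading_exp n I \<in> Poly_Mapping.keys (I r)"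
proof -
  have "(\<Union>r\<in>{1..n}. Poly_Mapping.keys (I r)) \<noteq> {}"
    using assms by auto
  then show ?thesis
    unfolding id_leading_exp_def using Max_in[of "\<Union>r\<in>{1..n}. Poly_Mapping.keys (I r)"] by auto
qed

lemma CHAR_eq_prime_card:
  assumes "prime p" and "card (UNIV :: 'a::ring_1 set) = p"
  shows "CHAR('a) = p"
  using CHAR_dvd_CARD[where 'a = 'a] CHAR_not_1[where 'a = 'a] assms
  by (metis One_nat_def prime_nat_iff)

lemma KZ_M_cong:
  assumes "0 < p" and "coprime q p"
  shows "[KZ_M p q m j * q + m j = 0] (mod p)"
proof -
  obtain x where x: "[q * x = 1] (mod p)"
    using cong_solve_coprime_nat[OF assms(2)] by auto
  define M where "M = x * (p - 1) * m j + p"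
  have "[M * q + m j = (q * x) * ((p - 1) * m j) + p * q + m j] (mod p)"
    unfolding M_def by (simp add: algebra_simps)
  also have "[(q * x) * ((p - 1) * m j) + p * q + m j = 1 * ((p - 1) * m j) + 0 + m j] (mod p)"
    using x by (intro cong_add cong_mult cong_refl) (auto simp: cong_def)
  also have "1 * ((p - 1) * m j) + 0 + m j = p * m j"
    using assms(1) by (simp add: algebra_simps)
  also have "[p * m j = 0] (mod p)"
    by (simp add: cong_0_iff)
  finally have "\<exists>M > 0. [M * q + m j = 0] (mod p)"
    using assms(1) by (auto simp: M_def)
  then show ?thesis
    unfolding KZ_M_def by (rule LeastI2_ex) auto
qed

lemma of_nat_KZ_M_mult:
  assumes "CHAR('a::ring_1) = p" and "0 < p" and "coprime q p"
  shows "of_nat (KZ_M p q m j) * of_nat q = - (of_nat (m j) :: 'a)"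
proof -
  have "(of_nat (KZ_M p q m j * q + m j) :: 'a) = 0"
    unfolding of_nat_eq_0_iff_char_dvd assms(1) using KZ_M_cong[OF assms(2,3)] by (simp add: cong_0_iff)
  then show ?thesis
    by (simp add: eq_neg_iff_add_eq_0)
qed

lemma of_nat_mult_OmegaM:
  assumes "\<And>i. of_nat (M i) * of_nat q = - (of_nat (m i) :: 'a::comm_ring_1)" and "j \<noteq> l"
  shows "of_nat q * of_int (OmegaM M j l r s) = (of_int (Omega m j l r s) :: 'a)"
  using assms unfolding OmegaM_def Omega_def by (auto simp: mult.commute)

lemma sum_M_mult_eq_0:
  fixes C :: "nat \<Rightarrow> 'a::field"
  assumes "\<And>i. of_nat (M i) * of_nat q = - (of_nat (m i) :: 'a)" and "of_nat q \<noteq> (0 :: 'a)"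
    and "(\<Sum>i\<in>A. of_nat (m i) * C i) = 0"
  shows "(\<Sum>i\<in>A. of_nat (M i) * C i) = 0"
proof -
  have "of_nat q * (\<Sum>i\<in>A. of_nat (M i) * C i) = (\<Sum>i\<in>A. (of_nat (M i) * of_nat q) * C i)"
    by (simp add: sum_distrib_left ac_simps)
  also have "\<dots> = 0"
    using assms(3) by (simp add: assms(1) sum_negf)
  finally show ?thesis using assms(2) by simp
qed

lemma OmegaM_eq_of_Omega_eq:
  fixes C :: "nat \<Rightarrow> 'a::field"
  assumes M: "\<And>i. of_nat (M i) * of_nat q = - (of_nat (m i) :: 'a)" and "of_nat q \<noteq> (0 :: 'a)"
    and Omega_eq: "of_nat q * c = (\<Sum>l\<in>{j+1..n}. \<Sum>s=1..n. of_int (Omega m j l r s) * C s)"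
  shows "(\<Sum>l\<in>{j+1..n}. \<Sum>s=1..n. of_int (OmegaM M j l r s) * C s) = c"
proof -
  have "of_nat q * (\<Sum>l\<in>{j+1..n}. \<Sum>s=1..n. of_int (OmegaM M j l r s) * C s)
      = (\<Sum>l\<in>{j+1..n}. \<Sum>s=1..n. (of_nat q * of_int (OmegaM M j l r s)) * C s)"
    by (simp add: sum_distrib_left mult.assoc)
  also have "\<dots> = of_nat q * c"
    unfolding Omega_eq by (intro sum.cong refl) (simp add: of_nat_mult_OmegaM[OF M])
  finally show ?thesis using assms(2) by simp
qed

theorem corollary5p2:
  fixes p q n :: nat and m :: "nat \<Rightarrow> nat" and I :: "nat \<Rightarrow> 'a::field mpoly"
    and d :: "nat \<Rightarrow>\<^sub>0 nat" and C :: "nat \<Rightarrow> 'a"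
  assumes "prime p" and "prime q" and "n \<ge> 2" and "p > n" and "p > q"
    and "card (UNIV :: 'a set) = p"
    and "\<forall>i\<in>{1..n}. 0 < m i \<and> m i < q"
    and "is_KZ_solution n q m I"
    and "\<exists>r\<in>{1..n}. I r \<noteq> 0"
    and "d = id_leading_exp n I"
    and "\<forall>j. C j = Poly_Mapping.lookup (I j) d"
  shows "(\<Sum>j=1..n. of_nat (KZ_M p q m j) * C j) = 0 \<and>
         (\<forall>j\<in>{1..n-1}. \<forall>r\<in>{1..n}.
           (\<Sum>l\<in>{j+1..n}. \<Sum>s=1..n. of_int (OmegaM (KZ_M p q m) j l r s) * C s)
           = of_nat (Poly_Mapping.lookup d j) * C r) \<and>
         p dvd Poly_Mapping.lookup d n"
proof -
  have "CHAR('a) = p" using assms(1,6) by (rule CHAR_eq_prime_card)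
  have M: "of_nat (KZ_M p q m j) * of_nat q = - (of_nat (m j) :: 'a)" for j
    using \<open>CHAR('a) = p\<close> prime_gt_0_nat[OF assms(1)]
    by (rule of_nat_KZ_M_mult) (use assms(1,2,5) in \<open>simp add: primes_coprime\<close>)
  have "(of_nat q :: 'a) \<noteq> 0"
    using \<open>CHAR('a) = p\<close> assms(2,5) prime_gt_0_nat[OF assms(2)]
    by (auto simp: of_nat_eq_0_iff_char_dvd dest: dvd_imp_le)
  have lead: "of_nat q * (of_nat (Poly_Mapping.lookup d i) * C r)
      = (\<Sum>j\<in>{i+1..n}. \<Sum>s=1..n. of_int (Omega m i j r s) * C s)" if "i \<in> {1..n}" "r \<in> {1..n}" for i r
    using KZ_leading_coeff_eq[OF assms(8) keys_subset_id_leading_exp that] assms(10,11) by simp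
  obtain r where r: "r \<in> {1..n}" "C r \<noteq> 0"
    using id_leading_exp_in_keys[OF assms(9)] assms(10,11) by (auto simp: in_keys_iff)
  have "(\<Sum>j=1..n. of_nat (KZ_M p q m j) * C j) = 0"
    using KZ_weighted_coeff_sum[OF assms(8)] assms(11)
    by (intro sum_M_mult_eq_0[OF M \<open>of_nat q \<noteq> 0\<close>]) simp
  moreover have "(\<Sum>l\<in>{j+1..n}. \<Sum>s=1..n. of_int (OmegaM (KZ_M p q m) j l r s) * C s)
      = of_nat (Poly_Mapping.lookup d j) * C r" if "j \<in> {1..n-1}" "r \<in> {1..n}" for j r
    using that by (intro OmegaM_eq_of_Omega_eq[OF M \<open>of_nat q \<noteq> 0\<close>] lead) auto
  moreover have "of_nat q * (of_nat (Poly_Mapping.lookup d n) * C r) = 0"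
    using lead[of n r] r assms(3) by simp
  ultimately show ?thesis
    using \<open>of_nat q \<noteq> 0\<close> r \<open>CHAR('a) = p\<close> by (auto simp: of_nat_eq_0_iff_char_dvd)
qed

end
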